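(* Let $t$ be a planar binary tree with $n\ge1$ internal vertices, with leaves $l_1,\dots,l_{n+1}$ numbered from left to right, and let $\varphi$ be a level function on $t$. Let $\sigma=\sigma_{t,\varphi}\in S_n$ be the associated permutation. Then the map $j\mapsto l_{j+1}$ restricts to a bijection from the descent set $D(\sigma)=\{i\in\{1,\dots,n-1\}:\sigma(i)>\sigma(i+1)\}$ onto the set of descents of $t$.
   Context: A planar binary tree is a finite planar rooted tree in which every internal vertex has exactly two incoming edges (left and right) and one outgoing edge; leaves are the external incoming edges. Internal vertices are partially ordered by $u<v$ iff $u$ lies on the path from the root to $v$. A level function is a bijection $\varphi$ from the set of internal vertices onto $\{1,\dots,n\}$ which is decreasing for this order (if $u<v$ then $\varphi(u)>\varphi(v)$; so the root has level $n$). For $i=1,\dots,n$, let $u_i$ be the internal vertex lying between $l_i$ and $l_{i+1}$, i.e. the unique internal vertex such that $l_i$ lies in its left subtree and $l_{i+1}$ in its right subtree; then $\sigma_{t,\varphi}(i):=\varphi(u_i)$. A leaf of $t$ is a descent if it is not the leftmost leaf and it is the left incoming edge of its internal vertex. *)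

theory Defs
  imports Main "HOL-Library.Sublist"
begin

datatype pbt = Leaf | Node pbt pbt

text \<open>Positions in a tree are addressed by paths from the root;
False = go to the left incoming edge, True = go to the right one.\<close>

fun internal_vertices :: "pbt \<Rightarrow> bool list set" where
  "internal_vertices Leaf = {}"
| "internal_vertices (Node l r) =
     {[]} \<union> Cons False ` internal_vertices l \<union> Cons True ` internal_vertices r"

fun leaves :: "pbt \<Rightarrow> bool list list" where
  "leaves Leaf = [[]]"
| "leaves (Node l r) = map (Cons False) (leaves l) @ map (Cons True) (leaves r)"

text \<open>Leaf l_i (1-based numbering from left to right).\<close>
definition leaf :: "pbt \<Rightarrow> nat \<Rightarrow> bool list" where
  "leaf t i = leaves t ! (i - 1)"

text \<open>u < v iff u lies on the path from the root to v (u a proper ancestor of v).\<close>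
definition vertex_less :: "bool list \<Rightarrow> bool list \<Rightarrow> bool" where
  "vertex_less u v \<longleftrightarrow> strict_prefix u v"

definition level_function :: "pbt \<Rightarrow> (bool list \<Rightarrow> nat) \<Rightarrow> bool" where
  "level_function t \<phi> \<longleftrightarrow>
     bij_betw \<phi> (internal_vertices t) {1..card (internal_vertices t)} \<and>
     (\<forall>u\<in>internal_vertices t. \<forall>v\<in>internal_vertices t. vertex_less u v \<longrightarrow> \<phi> u > \<phi> v)"

definition in_left_subtree :: "bool list \<Rightarrow> bool list \<Rightarrow> bool" where
  "in_left_subtree x u \<longleftrightarrow> prefix (u @ [False]) x"
definition in_right_subtree :: "bool list \<Rightarrow> bool list \<Rightarrow> bool" where
  "in_right_subtree x u \<longleftrightarrow> prefix (u @ [True]) x"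

definition between_vertex :: "pbt \<Rightarrow> nat \<Rightarrow> bool list" where
  "between_vertex t i = (THE u. u \<in> internal_vertices t \<and>
      in_left_subtree (leaf t i) u \<and> in_right_subtree (leaf t (Suc i)) u)"

definition sigma :: "pbt \<Rightarrow> (bool list \<Rightarrow> nat) \<Rightarrow> nat \<Rightarrow> nat" where
  "sigma t \<phi> i = \<phi> (between_vertex t i)"

definition perm_descents :: "(nat \<Rightarrow> nat) \<Rightarrow> nat \<Rightarrow> nat set" where
  "perm_descents \<sigma> n = {i \<in> {1..n-1}. \<sigma> i > \<sigma> (Suc i)}"

text \<open>Descents of a tree: leaves that are not the leftmost leaf and are the left
incoming edge of their internal vertex (i.e. the last step of the path is left).\<close>
definition tree_descents :: "pbt \<Rightarrow> bool list set" where
  "tree_descents t = {l \<in> set (leaves t). l \<noteq> leaf t 1 \<and> l \<noteq> [] \<and> last l = False}"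

end

theory Submission
  imports Defs
begin

text \<open>Write vertices as paths, 0 for left and 1 for right. Consecutive leaves are
  \<open>l\<^sub>i = u\<^sub>i 0 1\<^sup>p\<close> and \<open>l\<^sub>i\<^sub>+\<^sub>1 = u\<^sub>i 1 0\<^sup>q\<close>, where \<open>u\<^sub>i\<close> is the vertex between them. Comparing
  \<open>u\<^sub>i 1 0\<^sup>q = u\<^sub>i\<^sub>+\<^sub>1 0 1\<^sup>p\<close>, either \<open>q = 0\<close>: then \<open>l\<^sub>i\<^sub>+\<^sub>1\<close> is a right edge and \<open>u\<^sub>i\<^sub>+\<^sub>1\<close> is a proper
  ancestor of \<open>u\<^sub>i\<close>, so \<open>\<sigma>(i) < \<sigma>(i+1)\<close>; or \<open>p = 0\<close>: then \<open>l\<^sub>i\<^sub>+\<^sub>1\<close> is a left edge and \<open>u\<^sub>i\<close> is a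
  proper ancestor of \<open>u\<^sub>i\<^sub>+\<^sub>1\<close>, so \<open>\<sigma>(i) > \<sigma>(i+1)\<close>. Thus \<open>i\<close> is a descent of \<open>\<sigma>\<close> iff \<open>l\<^sub>i\<^sub>+\<^sub>1\<close>
  is a left edge, and the first and last leaves, which are never descents, correspond to no
  \<open>i \<in> {1..n-1}\<close>.\<close>

lemma finite_internal_vertices: "finite (internal_vertices t)"
  by (induction t) auto

lemma length_leaves: "length (leaves t) = Suc (card (internal_vertices t))"
proof (induction t)
  case Leaf
  then show ?case by simp
next
  case (Node l r)
  let ?A = "Cons False ` internal_vertices l" and ?B = "Cons True ` internal_vertices r"
  have "card (internal_vertices (Node l r)) = card (insert [] (?A \<union> ?B))"
    by simp
  also have "\<dots> = Suc (card (?A \<union> ?B))"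
    using finite_internal_vertices by (subst card_insert_disjoint) auto
  also have "\<dots> = Suc (card ?A + card ?B)"
    using finite_internal_vertices by (subst card_Un_disjoint) auto
  also have "\<dots> = Suc (card (internal_vertices l) + card (internal_vertices r))"
    by (simp add: card_image)
  finally show ?case using Node by simp
qed

lemma distinct_leaves: "distinct (leaves t)"
  by (induction t) (auto simp: distinct_map)

lemma leaves_not_Nil: "leaves t \<noteq> []"
  by (induction t) auto

lemma hd_leaves: "\<exists>p. hd (leaves t) = replicate p False"
proof (induction t)
  case Leaf
  show ?case by (rule exI[of _ 0]) simp
next
  case (Node l r)
  then obtain p where "hd (leaves l) = replicate p False" by blast
  then show ?case
    using leaves_not_Nil[of l] by (intro exI[of _ "Suc p"]) (cases "leaves l", auto)
qed

lemma last_leaves: "\<exists>p. last (leaves t) = replicate p True"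
proof (induction t)
  case Leaf
  show ?case by (rule exI[of _ 0]) simp
next
  case (Node l r)
  then obtain p where "last (leaves r) = replicate p True" by blast
  then show ?case
    using leaves_not_Nil[of r] by (intro exI[of _ "Suc p"]) (simp add: last_map)
qed

lemma consecutive_leaves_fork:
  assumes "Suc k < length (leaves t)"
  shows "\<exists>u p q. u \<in> internal_vertices t \<and>
    leaves t ! k = u @ False # replicate p True \<and> leaves t ! Suc k = u @ True # replicate q False"
  using assms
proof (induction t arbitrary: k)
  case Leaf
  then show ?case by simp
next
  case (Node l r)
  let ?L = "leaves l" and ?R = "leaves r"
  consider (in_left) "Suc k < length ?L" | (across_root) "Suc k = length ?L"
    | (in_right) "Suc k > length ?L"
    by linarith
  then show ?case
  proof cases
    case in_left
    with Node.IH(1) obtain u p q where "u \<in> internal_vertices l"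
      "?L ! k = u @ False # replicate p True" "?L ! Suc k = u @ True # replicate q False"
      by blast
    with in_left have "False # u \<in> internal_vertices (Node l r)"
      "leaves (Node l r) ! k = (False # u) @ False # replicate p True"
      "leaves (Node l r) ! Suc k = (False # u) @ True # replicate q False"
      by (auto simp: nth_append)
    then show ?thesis by blast
  next
    case across_root
    obtain p where "last ?L = replicate p True" using last_leaves by blast
    moreover obtain q where "hd ?R = replicate q False" using hd_leaves by blast
    moreover have "leaves (Node l r) ! k = False # last ?L"
      using across_root leaves_not_Nil[of l] by (simp add: nth_append last_conv_nth flip: across_root)
    moreover have "leaves (Node l r) ! Suc k = True # hd ?R"
      using across_root leaves_not_Nil[of r] by (simp add: nth_append hd_conv_nth)
    ultimately show ?thesis by (intro exI[of _ "[]"]) auto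
  next
    case in_right
    define k' where "k' = k - length ?L"
    have k: "k = length ?L + k'" "Suc k = length ?L + Suc k'" using in_right k'_def by simp_all
    have bound: "Suc k' < length ?R" using Node.prems k by simp
    with Node.IH(2) obtain u p q where "u \<in> internal_vertices r"
      "?R ! k' = u @ False # replicate p True" "?R ! Suc k' = u @ True # replicate q False"
      by blast
    then have "True # u \<in> internal_vertices (Node l r)"
      "leaves (Node l r) ! k = (True # u) @ False # replicate p True"
      "leaves (Node l r) ! Suc k = (True # u) @ True # replicate q False"
      using bound unfolding k by (auto simp: nth_append)
    then show ?thesis by blast
  qed
qed

lemma fork_unique:
  assumes "prefix (v @ [a]) (u @ b # xs)" "prefix (v @ [\<not> a]) (u @ (\<not> b) # ys)"
  shows "v = u"
  using assms
proof (induction u arbitrary: v)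
  case Nil
  then show ?case by (cases v) auto
next
  case (Cons x u)
  then show ?case by (cases v) auto
qed

lemma between_vertex_eq:
  assumes "u \<in> internal_vertices t"
    and "leaf t i = u @ False # xs" and "leaf t (Suc i) = u @ True # ys"
  shows "between_vertex t i = u"
  unfolding between_vertex_def
proof (rule the_equality)
  show "u \<in> internal_vertices t \<and> in_left_subtree (leaf t i) u \<and> in_right_subtree (leaf t (Suc i)) u"
    using assms by (simp add: in_left_subtree_def in_right_subtree_def)
next
  fix v
  assume "v \<in> internal_vertices t \<and> in_left_subtree (leaf t i) v \<and> in_right_subtree (leaf t (Suc i)) v"
  then show "v = u"
    using assms fork_unique[of v False u False xs ys]
    by (simp add: in_left_subtree_def in_right_subtree_def)
qed

lemma fork_paths_cases:
  assumes "u @ True # replicate q False = v @ False # replicate p True"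
  shows "(q = 0 \<and> strict_prefix v u) \<or> (p = 0 \<and> strict_prefix u v)"
proof (cases q)
  case 0
  with assms obtain p' where p: "p = Suc p'" by (cases p) auto
  with assms 0 have "u = v @ False # replicate p' True"
    by (simp add: replicate_append_same[symmetric])
  with 0 show ?thesis by (simp add: strict_prefix_def)
next
  case (Suc q')
  with assms obtain p: "p = 0" by (cases p) (auto simp: replicate_append_same[symmetric])
  with assms Suc have "v = u @ True # replicate q' False"
    by (simp add: replicate_append_same[symmetric])
  with p show ?thesis by (simp add: strict_prefix_def)
qed

text \<open>The list \<open>leaves t\<close> is indexed from 0, so \<open>leaves t ! i\<close> is the leaf \<open>l\<^sub>i\<^sub>+\<^sub>1\<close>.\<close>

lemma sigma_descent_iff_left_leaf:
  assumes "level_function t \<phi>" and "1 \<le> i" "Suc i < length (leaves t)"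
  shows "sigma t \<phi> i > sigma t \<phi> (Suc i) \<longleftrightarrow> leaves t ! i \<noteq> [] \<and> last (leaves t ! i) = False"
proof -
  have decreasing: "\<And>u v. u \<in> internal_vertices t \<Longrightarrow> v \<in> internal_vertices t \<Longrightarrow>
      strict_prefix u v \<Longrightarrow> \<phi> u > \<phi> v"
    using assms(1) unfolding level_function_def vertex_less_def by blast
  have i: "Suc (i - 1) = i" using assms(2) by simp
  obtain u p q where u: "u \<in> internal_vertices t"
    "leaves t ! (i - 1) = u @ False # replicate p True" "leaves t ! i = u @ True # replicate q False"
    using consecutive_leaves_fork[of "i - 1" t] assms(3) i by auto
  obtain v p' q' where v: "v \<in> internal_vertices t"
    "leaves t ! i = v @ False # replicate p' True" "leaves t ! Suc i = v @ True # replicate q' False"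
    using consecutive_leaves_fork[OF assms(3)] by blast
  have sigma_i: "sigma t \<phi> i = \<phi> u"
    using between_vertex_eq[OF u(1)] u(2,3) i by (simp add: sigma_def leaf_def)
  have sigma_Suc_i: "sigma t \<phi> (Suc i) = \<phi> v"
    using between_vertex_eq[OF v(1)] v(2,3) by (simp add: sigma_def leaf_def)
  from u(3) v(2) consider
      (right_edge) "q = 0" "strict_prefix v u" | (left_edge) "p' = 0" "strict_prefix u v"
    using fork_paths_cases by metis
  then show ?thesis
  proof cases
    case right_edge
    then have "\<phi> v > \<phi> u" using decreasing u(1) v(1) by blast
    moreover have "last (leaves t ! i) = True" using u(3) right_edge(1) by simp
    ultimately show ?thesis by (simp add: sigma_i sigma_Suc_i)
  next
    case left_edge
    then have "\<phi> u > \<phi> v" using decreasing u(1) v(1) by blast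
    moreover have "leaves t ! i \<noteq> [] \<and> last (leaves t ! i) = False" using v(2) left_edge(1) by simp
    ultimately show ?thesis by (simp add: sigma_i sigma_Suc_i)
  qed
qed

lemma perm_descents_sigma:
  assumes "level_function t \<phi>" and "n = card (internal_vertices t)"
  shows "perm_descents (sigma t \<phi>) n =
    {j \<in> {1..n-1}. leaves t ! j \<noteq> [] \<and> last (leaves t ! j) = False}"
  using sigma_descent_iff_left_leaf[OF assms(1)] assms(2) length_leaves[of t]
  unfolding perm_descents_def by auto

lemma tree_descents_conv_nth:
  assumes "n = card (internal_vertices t)"
  shows "tree_descents t =
    (!) (leaves t) ` {j \<in> {1..n-1}. leaves t ! j \<noteq> [] \<and> last (leaves t ! j) = False}"
proof -
  let ?P = "\<lambda>l. l \<noteq> [] \<and> last l = False"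
  have len: "length (leaves t) = Suc n" using assms length_leaves by simp
  obtain m where last: "last (leaves t) = replicate m True" using last_leaves by blast
  have not_last: "\<not> ?P (leaves t ! n)"
    using last len leaves_not_Nil[of t] by (cases m) (auto simp: last_conv_nth)
  have not_first: "leaves t ! j \<noteq> leaves t ! 0 \<longleftrightarrow> j \<noteq> 0" if "j < Suc n" for j
    using that len distinct_leaves[of t] by (simp add: nth_eq_iff_index_eq)
  have "tree_descents t = (!) (leaves t) ` {j. j < Suc n \<and> j \<noteq> 0 \<and> ?P (leaves t ! j)}"
    unfolding tree_descents_def leaf_def using len not_first
    by (auto simp: in_set_conv_nth)
  also have "{j. j < Suc n \<and> j \<noteq> 0 \<and> ?P (leaves t ! j)} = {j \<in> {1..n-1}. ?P (leaves t ! j)}"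
    using not_last by (auto simp: less_Suc_eq)
  finally show ?thesis .
qed

theorem lemma5p2:
  fixes t :: pbt and \<phi> :: "bool list \<Rightarrow> nat" and n :: nat
  assumes "n = card (internal_vertices t)"
    and "n \<ge> 1"
    and "level_function t \<phi>"
  shows "bij_betw (\<lambda>j. leaf t (j + 1)) (perm_descents (sigma t \<phi>) n) (tree_descents t)"
proof -
  have "(\<lambda>j. leaf t (j + 1)) = (!) (leaves t)"
    by (simp add: leaf_def)
  moreover have "inj_on ((!) (leaves t)) (perm_descents (sigma t \<phi>) n)"
    using assms(1) length_leaves[of t]
    by (intro inj_on_nth distinct_leaves) (auto simp: perm_descents_def)
  ultimately show ?thesis
    using perm_descents_sigma[OF assms(3,1)] tree_descents_conv_nth[OF assms(1)]
    by (simp add: bij_betw_def)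
qed

end
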